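(* Let $\{f_j\}_{j=1}^m$, $m\ge2$, be an iterated function system of similarities of $\mathbb{C}$ with common contraction ratio $|\lambda|<1$ and connected attractor $A=\bigcup_j A_j$, $A_j=f_j(A)$, which is invertible with map $q:A\to A$ and has finite nonempty overlap set $\mathcal{O}$. Suppose $q$ is critically non-recurrent and $A$ is of bounded turning with constant $L$. Then there are constants $C\ge1$, $\delta_1>0$ (depending only on the system, not on $L$) such that for every connected $B\subset A$ with $\operatorname{diam}B<\delta_1$, every $n\ge0$, every $x\in q^{-n}(B)$, and $W$ the connected component of $q^{-n}(B)$ containing $x$, $$C|\lambda|^n\operatorname{diam}B\ge\operatorname{diam}W\ge\operatorname{inr}(W,x)\ge(CL)^{-1}|\lambda|^n\operatorname{inr}(B,q^n(x)).$$
   Context: Each $f_j$ is of the form $f_j(z)=|\lambda|e^{i\theta_j}z+d_j$ or $|\lambda|e^{i\theta_j}\overline{z}+d_j$. Invertible: there is continuous $q:A\to A$ with $q|_{A_j}=(f_j|_A)^{-1}$ for each $j$. Overlap set $\mathcal{O}=\bigcup_{i\ne j}(A_i\cap A_j)$. Critically non-recurrent: for every $z\in\mathcal{O}$ the limit set of $\{q^n(z)\}_{n\ge1}$ does not contain $z$. $A$ is of bounded turning with constant $L$ if any $z_1,z_2\in A$ are joined by a curve in $A$ of diameter at most $L|z_1-z_2|$. For $S\subset A$ and $y\in S$, $\operatorname{inr}(S,y)=\inf\{|y-w|:w\in A\setminus S\}$. *)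

theory Defs
  imports "HOL-Analysis.Analysis"
begin

definition similarity_IFS :: "nat \<Rightarrow> real \<Rightarrow> (nat \<Rightarrow> complex \<Rightarrow> complex) \<Rightarrow> bool" where
  "similarity_IFS m r f \<longleftrightarrow>
     (\<forall>j\<in>{1..m}. \<exists>\<theta> d. f j = (\<lambda>z. complex_of_real r * cis \<theta> * z + d)
                        \<or> f j = (\<lambda>z. complex_of_real r * cis \<theta> * cnj z + d))"

definition is_attractor :: "nat \<Rightarrow> (nat \<Rightarrow> complex \<Rightarrow> complex) \<Rightarrow> complex set \<Rightarrow> bool" where
  "is_attractor m f A \<longleftrightarrow> compact A \<and> A \<noteq> {} \<and> A = (\<Union>j\<in>{1..m}. f j ` A)"

definition inverse_map :: "nat \<Rightarrow> (nat \<Rightarrow> complex \<Rightarrow> complex) \<Rightarrow> complex set \<Rightarrow> (complex \<Rightarrow> complex) \<Rightarrow> bool" where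
  "inverse_map m f A q \<longleftrightarrow> continuous_on A q \<and> q ` A \<subseteq> A \<and> (\<forall>j\<in>{1..m}. \<forall>z\<in>A. q (f j z) = z)"

definition overlap_set :: "nat \<Rightarrow> (nat \<Rightarrow> complex \<Rightarrow> complex) \<Rightarrow> complex set \<Rightarrow> complex set" where
  "overlap_set m f A = {z. \<exists>i\<in>{1..m}. \<exists>j\<in>{1..m}. i \<noteq> j \<and> z \<in> f i ` A \<and> z \<in> f j ` A}"

definition orbit_limit_set :: "(complex \<Rightarrow> complex) \<Rightarrow> complex \<Rightarrow> complex set" where
  "orbit_limit_set q z = {w. \<forall>e>0. \<forall>N. \<exists>n\<ge>N. n \<ge> 1 \<and> dist ((q ^^ n) z) w < e}"

definition critically_non_recurrent :: "nat \<Rightarrow> (nat \<Rightarrow> complex \<Rightarrow> complex) \<Rightarrow> complex set \<Rightarrow> (complex \<Rightarrow> complex) \<Rightarrow> bool" where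
  "critically_non_recurrent m f A q \<longleftrightarrow> (\<forall>z\<in>overlap_set m f A. z \<notin> orbit_limit_set q z)"

definition bounded_turning :: "complex set \<Rightarrow> real \<Rightarrow> bool" where
  "bounded_turning A L \<longleftrightarrow>
     (\<forall>z1\<in>A. \<forall>z2\<in>A. \<exists>\<gamma>. path \<gamma> \<and> path_image \<gamma> \<subseteq> A \<and> pathstart \<gamma> = z1 \<and> pathfinish \<gamma> = z2
         \<and> diameter (path_image \<gamma>) \<le> L * dist z1 z2)"

definition inr :: "complex set \<Rightarrow> complex set \<Rightarrow> complex \<Rightarrow> real" where
  "inr A S y = infdist y (A - S)"

definition preimage_iter :: "complex set \<Rightarrow> (complex \<Rightarrow> complex) \<Rightarrow> nat \<Rightarrow> complex set \<Rightarrow> complex set" where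
  "preimage_iter A q n B = {z\<in>A. (q ^^ n) z \<in> B}"

end

theory Submission
  imports Defs
begin

text \<open>On each piece f j ` A the map q is a similarity of ratio 1/\<rho>, so pulling a small connected
  set back by q multiplies its diameter by \<rho> and pushing it forward multiplies it by 1/\<rho>, as long
  as the set lies in a single piece. A small connected set meeting the finite, separated overlap
  set contains exactly one overlap point, and every one of its points shares a piece with it; this
  costs a factor 2. Critical non-recurrence keeps the returns of the overlap points far away, so
  along a chain of small sets each overlap point is met at most once, and the total loss is at
  most 2 to the number of overlap points. This bounds diam W. For the bound on inr(W,x), push a
  bounded-turning path from x to a point outside W forward by q^n: if the path is short, its image
  stays in B, so the path lies in W.\<close>


lemma diameter_image_le:
  fixes g :: "'a::metric_space \<Rightarrow> 'b::metric_space"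
  assumes "bounded S" "0 \<le> k" "\<And>x y. x \<in> S \<Longrightarrow> y \<in> S \<Longrightarrow> dist (g x) (g y) \<le> k * dist x y"
  shows "diameter (g ` S) \<le> k * diameter S"
proof (cases "S = {}")
  case False
  have "dist (g x) (g y) \<le> k * diameter S" if "x \<in> S" "y \<in> S" for x y
    using assms(3)[OF that] mult_left_mono[OF diameter_bounded_bound[OF assms(1) that] assms(2)]
    by linarith
  then show ?thesis
    using False unfolding diameter_def by (auto intro!: cSUP_least)
qed simp

lemma finite_uniform_lower_bound:
  fixes g :: "'a \<Rightarrow> 'b \<Rightarrow> real"
  assumes "finite S" "\<And>x. x \<in> S \<Longrightarrow> \<exists>e>0. \<forall>y\<in>T x. e \<le> g x y"
  shows "\<exists>e>0. \<forall>x\<in>S. \<forall>y\<in>T x. e \<le> g x y"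
  using assms
proof (induction S rule: finite_induct)
  case empty
  show ?case by (intro exI[of _ 1]) simp
next
  case (insert a S)
  obtain e1 where "e1 > 0" "\<forall>x\<in>S. \<forall>y\<in>T x. e1 \<le> g x y"
    using insert by blast
  moreover obtain e2 where "e2 > 0" "\<forall>y\<in>T a. e2 \<le> g a y"
    using insert.prems by blast
  ultimately have "\<forall>x\<in>insert a S. \<forall>y\<in>T x. min e1 e2 \<le> g x y"
    by (auto intro: min.coboundedI1 min.coboundedI2)
  then show ?case
    using \<open>e1 > 0\<close> \<open>e2 > 0\<close> by (intro exI[of _ "min e1 e2"]) simp
qed

lemma connected_cover_by_separated_cballs:
  fixes S :: "'a::metric_space set"
  assumes S: "connected S" "S \<subseteq> (\<Union>c\<in>F. cball c r)"
    and F: "finite F" "F \<subseteq> S"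
    and sep: "\<And>c c'. c \<in> F \<Longrightarrow> c' \<in> F \<Longrightarrow> c \<noteq> c' \<Longrightarrow> 2 * r < dist c c'"
    and c: "c \<in> F" "c' \<in> F"
  shows "c = c'"
proof (rule ccontr)
  assume "c \<noteq> c'"
  define E1 E2 where "E1 = cball c r" and "E2 = (\<Union>b\<in>F - {c}. cball b r)"
  have "c \<in> (\<Union>b\<in>F. cball b r)"
    using S(2) F(2) c(1) by blast
  then have "r \<ge> 0"
    by (metis UN_E mem_cball zero_le_dist order_trans)
  have "closed E1" "closed E2"
    unfolding E1_def E2_def using F(1) by auto
  moreover have "S \<subseteq> E1 \<union> E2"
    using S(2) unfolding E1_def E2_def by blast
  moreover have "E1 \<inter> E2 = {}"
  proof -
    have "p \<notin> cball b r" if "p \<in> cball c r" "b \<in> F - {c}" for b p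
      using sep[of c b] that c(1) dist_triangle2[of c b p] by auto
    then show ?thesis
      unfolding E1_def E2_def by blast
  qed
  moreover have "c \<in> E1 \<inter> S"
    unfolding E1_def using \<open>r \<ge> 0\<close> c(1) F(2) by auto
  moreover have "c' \<in> E2 \<inter> S"
    unfolding E2_def using \<open>r \<ge> 0\<close> \<open>c \<noteq> c'\<close> c(2) F(2) by (auto intro!: bexI[of _ c'])
  ultimately show False
    using S(1) unfolding connected_closed by blast
qed

lemma infdist_le_diameter_of_connected:
  fixes A S :: "'a::real_normed_vector set"
  assumes "connected A" "S \<subseteq> A" "bounded S" "y \<in> S"
  shows "infdist y (A - S) \<le> diameter S"
proof (rule ccontr)
  assume "\<not> ?thesis"
  then have lt: "diameter S < infdist y (A - S)" by simp
  then have "A - S \<noteq> {}"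
    using diameter_ge_0[OF assms(3)] by (auto simp: infdist_def)
  then obtain a where a: "a \<in> A - S" by blast
  define t where "t = (diameter S + infdist y (A - S)) / 2"
  have t: "diameter S < t" "t < infdist y (A - S)"
    using lt unfolding t_def by auto
  then have "0 < t"
    using diameter_ge_0[OF assms(3)] by linarith
  have "A \<inter> ball y t \<noteq> {}"
    using assms(2,4) \<open>0 < t\<close> by auto
  moreover have "A - ball y t \<noteq> {}"
    using a infdist_le[OF a, of y] t by auto
  ultimately have "A \<inter> frontier (ball y t) \<noteq> {}"
    using connected_Int_frontier[OF assms(1)] by blast
  then obtain w where "w \<in> A" "w \<in> frontier (ball y t)"
    by blast
  then have w: "w \<in> A" "dist y w = t"
    by (simp_all only: frontier_ball[OF \<open>0 < t\<close>] mem_sphere)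
  show False
  proof (cases "w \<in> S")
    case True
    then show False
      using diameter_bounded_bound[OF assms(3,4) True] w t by linarith
  next
    case False
    then show False
      using infdist_le[of w "A - S" y] w t by auto
  qed
qed

lemma doubling_growth_bound:
  fixes d :: "nat \<Rightarrow> real" and c :: "nat \<Rightarrow> nat"
  assumes "0 \<le> a" "0 \<le> D" "d 0 \<le> 2 ^ c 0 * D"
    and mono: "\<And>k. c k \<le> c (Suc k)"
    and step: "\<And>k. k < n \<Longrightarrow> (\<And>j. j \<le> k \<Longrightarrow> d j \<le> 2 ^ c j * a ^ j * D) \<Longrightarrow>
       d (Suc k) \<le> a * d k \<or> d (Suc k) \<le> 2 * a * d k \<and> c k < c (Suc k)"
    and "k \<le> n"
  shows "d k \<le> 2 ^ c k * a ^ k * D"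
proof -
  have "\<forall>j\<le>k. d j \<le> 2 ^ c j * a ^ j * D"
    using \<open>k \<le> n\<close>
  proof (induction k)
    case 0
    then show ?case using assms(3) by simp
  next
    case (Suc k)
    then have IH: "\<And>j. j \<le> k \<Longrightarrow> d j \<le> 2 ^ c j * a ^ j * D" by simp
    have aD: "0 \<le> a ^ Suc k * D"
      using assms(1,2) by simp
    have "k < n" using Suc.prems by simp
    then have "d (Suc k) \<le> a * d k \<or> d (Suc k) \<le> 2 * a * d k \<and> c k < c (Suc k)"
      using IH by (intro step)
    then have "d (Suc k) \<le> 2 ^ c (Suc k) * a ^ Suc k * D"
    proof (elim disjE conjE)
      assume "d (Suc k) \<le> a * d k"
      also have "\<dots> \<le> a * (2 ^ c k * a ^ k * D)"
        using IH[of k] assms(1) by (simp add: mult_left_mono)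
      also have "\<dots> = 2 ^ c k * (a ^ Suc k * D)" by simp
      also have "\<dots> \<le> 2 ^ c (Suc k) * (a ^ Suc k * D)"
        using mono aD by (intro mult_right_mono power_increasing) auto
      finally show ?thesis by simp
    next
      assume le: "d (Suc k) \<le> 2 * a * d k" and grow: "c k < c (Suc k)"
      note le
      also have "2 * a * d k \<le> 2 * a * (2 ^ c k * a ^ k * D)"
        using IH[of k] assms(1) by (simp add: mult_left_mono)
      also have "\<dots> = 2 ^ Suc (c k) * (a ^ Suc k * D)" by simp
      also have "\<dots> \<le> 2 ^ c (Suc k) * (a ^ Suc k * D)"
        using grow aD by (intro mult_right_mono power_increasing) auto
      finally show ?thesis by simp
    qed
    then show ?case
      using IH le_Suc_eq by auto
  qed
  then show ?thesis by simp
qed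

locale invertible_ifs =
  fixes m :: nat and f :: "nat \<Rightarrow> complex \<Rightarrow> complex" and \<rho> :: real
    and A :: "complex set" and q :: "complex \<Rightarrow> complex"
  assumes ratio: "0 < \<rho>" "\<rho> < 1"
    and similarity: "similarity_IFS m \<rho> f"
    and attractor: "is_attractor m f A"
    and connected_A: "connected A"
    and inverse: "inverse_map m f A q"
    and finite_overlap: "finite (overlap_set m f A)"
    and non_recurrent: "critically_non_recurrent m f A q"
begin

abbreviation "Ov \<equiv> overlap_set m f A"

lemma A_eq_Union_pieces: "A = (\<Union>j\<in>{1..m}. f j ` A)"
  using attractor by (simp add: is_attractor_def)

lemma bounded_subset_A: "S \<subseteq> A \<Longrightarrow> bounded S"
  using attractor bounded_subset compact_imp_bounded by (auto simp: is_attractor_def)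

lemma q_maps_A: "q ` A \<subseteq> A"
  and continuous_on_q: "continuous_on A q"
  and q_f: "j \<in> {1..m} \<Longrightarrow> z \<in> A \<Longrightarrow> q (f j z) = z"
  using inverse by (auto simp: inverse_map_def)

lemma f_similarity_form:
  assumes "j \<in> {1..m}"
  obtains \<theta> d where "f j = (\<lambda>z. complex_of_real \<rho> * cis \<theta> * z + d)"
    | \<theta> d where "f j = (\<lambda>z. complex_of_real \<rho> * cis \<theta> * cnj z + d)"
  using similarity assms unfolding similarity_IFS_def by blast

lemma dist_f:
  assumes "j \<in> {1..m}"
  shows "dist (f j z) (f j w) = \<rho> * dist z w"
  using assms
proof (cases rule: f_similarity_form)
  case (1 \<theta> d)
  then have "f j z - f j w = complex_of_real \<rho> * cis \<theta> * (z - w)"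
    by (simp add: algebra_simps)
  then show ?thesis
    using ratio by (simp add: dist_norm norm_mult)
next
  case (2 \<theta> d)
  then have "f j z - f j w = complex_of_real \<rho> * cis \<theta> * cnj (z - w)"
    by (simp add: algebra_simps)
  then have "norm (f j z - f j w) = \<rho> * norm (cnj (z - w))"
    using ratio by (simp only: norm_mult) simp
  then show ?thesis
    by (simp only: complex_mod_cnj dist_norm)
qed

lemma closed_piece: "j \<in> {1..m} \<Longrightarrow> closed (f j ` A)"
proof -
  assume j: "j \<in> {1..m}"
  have "continuous_on A (f j)"
    using j by (cases rule: f_similarity_form) (auto intro!: continuous_intros)
  then show "closed (f j ` A)"
    using attractor compact_continuous_image compact_imp_closed by (auto simp: is_attractor_def)
qed

lemma dist_q_piece:
  "j \<in> {1..m} \<Longrightarrow> z \<in> f j ` A \<Longrightarrow> w \<in> f j ` A \<Longrightarrow> dist z w = \<rho> * dist (q z) (q w)"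
  using q_f dist_f by auto

lemma funpow_q_maps_A: "(q ^^ n) ` A \<subseteq> A"
  by (induction n) (use q_maps_A in auto)

lemma continuous_on_funpow_q: "continuous_on A (q ^^ n)"
proof (induction n)
  case (Suc n)
  then show ?case
    using continuous_on_compose[OF Suc continuous_on_subset[OF continuous_on_q funpow_q_maps_A]]
    by (simp add: o_def)
qed (simp add: continuous_on_id)

lemma A_subset_image_funpow_q: "A \<subseteq> (q ^^ n) ` A"
proof (induction n)
  case (Suc n)
  have "A \<subseteq> q ` A"
  proof
    fix z
    assume "z \<in> A"
    then obtain j where "j \<in> {1..m}"
      using A_eq_Union_pieces by blast
    then have "f j z \<in> A" "q (f j z) = z"
      using \<open>z \<in> A\<close> A_eq_Union_pieces q_f by blast+
    then show "z \<in> q ` A"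
      by (metis image_eqI)
  qed
  also have "\<dots> \<subseteq> q ` ((q ^^ n) ` A)"
    using Suc by blast
  finally show ?case
    by (simp add: image_comp)
qed simp

lemma connected_in_piece_or_overlap:
  assumes "\<Gamma> \<subseteq> A" "connected \<Gamma>" "z \<in> \<Gamma>" "j \<in> {1..m}" "z \<in> f j ` A"
  shows "\<Gamma> \<subseteq> f j ` A \<or> (\<exists>c\<in>Ov \<inter> \<Gamma>. c \<in> f j ` A)"
proof (rule ccontr)
  assume none: "\<not> ?thesis"
  define E where "E = (\<Union>i\<in>{1..m} - {j}. f i ` A)"
  have "closed (f j ` A)" "closed E"
    unfolding E_def using closed_piece assms(4) by auto
  moreover have "\<Gamma> \<subseteq> f j ` A \<union> E"
    using assms(1) A_eq_Union_pieces unfolding E_def by blast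
  moreover have "f j ` A \<inter> E \<inter> \<Gamma> = {}"
    using none assms(4) unfolding E_def overlap_set_def by blast
  moreover have "f j ` A \<inter> \<Gamma> \<noteq> {}" "E \<inter> \<Gamma> \<noteq> {}"
    using assms(3,5) none calculation(3) by blast+
  ultimately show False
    using assms(2) unfolding connected_closed by blast
qed

lemma connected_no_overlap_in_piece:
  assumes "\<Gamma> \<subseteq> A" "connected \<Gamma>" "\<Gamma> \<noteq> {}" "Ov \<inter> \<Gamma> = {}"
  obtains j where "j \<in> {1..m}" "\<Gamma> \<subseteq> f j ` A"
proof -
  obtain z where "z \<in> \<Gamma>"
    using assms(3) by blast
  then obtain j where "j \<in> {1..m}" "z \<in> f j ` A"
    using assms(1) A_eq_Union_pieces by blast
  then show thesis
    using connected_in_piece_or_overlap[OF assms(1,2) \<open>z \<in> \<Gamma>\<close>] assms(4) that by blast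
qed

lemma diameter_image_q_piece:
  assumes "j \<in> {1..m}" "\<Gamma> \<subseteq> f j ` A"
  shows "diameter (q ` \<Gamma>) = diameter \<Gamma> / \<rho>"
proof -
  have "\<Gamma> \<subseteq> A"
    using assms A_eq_Union_pieces by blast
  have "q ` \<Gamma> \<subseteq> A"
    using assms q_f by auto
  have "dist (q z) (q w) = (1 / \<rho>) * dist z w" if "z \<in> \<Gamma>" "w \<in> \<Gamma>" for z w
  proof -
    have "dist z w = \<rho> * dist (q z) (q w)"
      using dist_q_piece[OF assms(1)] assms(2) that by blast
    then show ?thesis
      using ratio by simp
  qed
  then have "diameter (q ` \<Gamma>) \<le> (1 / \<rho>) * diameter \<Gamma>"
    using ratio by (intro diameter_image_le bounded_subset_A[OF \<open>\<Gamma> \<subseteq> A\<close>]) auto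
  moreover have "f j (q z) = z" if "z \<in> \<Gamma>" for z
    using assms(2) that q_f[OF assms(1)] by auto
  then have "f j ` q ` \<Gamma> = \<Gamma>"
    by (simp add: image_image cong: image_cong)
  then have "diameter \<Gamma> \<le> \<rho> * diameter (q ` \<Gamma>)"
    using diameter_image_le[OF bounded_subset_A[OF \<open>q ` \<Gamma> \<subseteq> A\<close>], of \<rho> "f j"]
      ratio dist_f[OF assms(1)] by simp
  ultimately show ?thesis
    using ratio by (simp add: field_simps)
qed

lemma diameter_image_q_no_overlap:
  assumes "\<Gamma> \<subseteq> A" "connected \<Gamma>" "Ov \<inter> \<Gamma> = {}"
  shows "diameter (q ` \<Gamma>) = diameter \<Gamma> / \<rho>"
proof (cases "\<Gamma> = {}")
  case False
  then obtain j where "j \<in> {1..m}" "\<Gamma> \<subseteq> f j ` A"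
    using connected_no_overlap_in_piece assms by metis
  then show ?thesis
    by (rule diameter_image_q_piece)
qed simp

lemma overlap_not_periodic:
  assumes "c \<in> Ov" "1 \<le> k"
  shows "(q ^^ k) c \<noteq> c"
proof
  assume fixed: "(q ^^ k) c = c"
  have "((q ^^ k) ^^ j) c = c" for j
    by (induction j) (simp_all add: fixed)
  then have periodic: "(q ^^ (k * j)) c = c" for j
    by (simp add: funpow_mult)
  have "c \<in> orbit_limit_set q c"
    unfolding orbit_limit_set_def
  proof (intro CollectI allI impI)
    fix e :: real and N :: nat
    assume "e > 0"
    moreover have "N \<le> k * Suc N" "1 \<le> k * Suc N"
      using assms(2) mult_le_mono1[of 1 k "Suc N"] by simp_all
    ultimately show "\<exists>n\<ge>N. 1 \<le> n \<and> dist ((q ^^ n) c) c < e"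
      using periodic[of "Suc N"] by (intro exI[of _ "k * Suc N"]) simp
  qed
  then show False
    using non_recurrent assms(1) by (simp add: critically_non_recurrent_def)
qed

lemma overlap_returns_bounded_away:
  assumes "c \<in> Ov"
  shows "\<exists>\<eta>>0. \<forall>k\<in>{1..}. \<eta> \<le> dist ((q ^^ k) c) c"
proof -
  have "c \<notin> orbit_limit_set q c"
    using non_recurrent assms by (simp add: critically_non_recurrent_def)
  then obtain e N where "e > 0" and "\<forall>n\<ge>N. 1 \<le> n \<longrightarrow> \<not> dist ((q ^^ n) c) c < e"
    unfolding orbit_limit_set_def by auto
  then have far: "\<And>n. N \<le> n \<Longrightarrow> 1 \<le> n \<Longrightarrow> e \<le> dist ((q ^^ n) c) c"
    by (simp add: not_less)
  obtain \<delta> where "\<delta> > 0" and near: "\<forall>y\<in>(\<lambda>k. (q ^^ k) c) ` {1..<N}. y \<noteq> c \<longrightarrow> \<delta> \<le> dist c y"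
    using finite_set_avoid[of "(\<lambda>k. (q ^^ k) c) ` {1..<N}" c] by blast
  have "min e \<delta> \<le> dist ((q ^^ k) c) c" if "1 \<le> k" for k
  proof (cases "k < N")
    case True
    then have "(q ^^ k) c \<in> (\<lambda>k. (q ^^ k) c) ` {1..<N}"
      using that by simp
    then have "\<delta> \<le> dist c ((q ^^ k) c)"
      using near overlap_not_periodic[OF assms that] by blast
    then show ?thesis
      by (simp add: dist_commute min.coboundedI2)
  next
    case False
    then show ?thesis
      using far[of k] that by simp
  qed
  then show ?thesis
    using \<open>e > 0\<close> \<open>\<delta> > 0\<close> by (intro exI[of _ "min e \<delta>"]) auto
qed

lemma overlap_separated: "\<exists>s>0. \<forall>c\<in>Ov. \<forall>c'\<in>Ov - {c}. s \<le> dist c c'"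
proof (rule finite_uniform_lower_bound[OF finite_overlap])
  fix c
  obtain \<delta> where "\<delta> > 0" "\<forall>x\<in>Ov. x \<noteq> c \<longrightarrow> \<delta> \<le> dist c x"
    using finite_set_avoid[OF finite_overlap] by blast
  then show "\<exists>\<delta>>0. \<forall>c'\<in>Ov - {c}. \<delta> \<le> dist c c'"
    by auto
qed

lemma overlap_non_recurrent: "\<exists>\<eta>>0. \<forall>c\<in>Ov. \<forall>k\<in>{1..}. \<eta> \<le> dist ((q ^^ k) c) c"
  using finite_uniform_lower_bound[OF finite_overlap overlap_returns_bounded_away] .

lemma overlap_in_common_piece:
  assumes "\<Gamma> \<subseteq> A" "connected \<Gamma>" "Ov \<inter> \<Gamma> \<noteq> {}" "z \<in> \<Gamma>"
  obtains c j where "c \<in> Ov \<inter> \<Gamma>" "j \<in> {1..m}" "z \<in> f j ` A" "c \<in> f j ` A"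
proof -
  obtain j where j: "j \<in> {1..m}" "z \<in> f j ` A"
    using assms(1,4) A_eq_Union_pieces by blast
  then show thesis
    using connected_in_piece_or_overlap[OF assms(1,2,4) j] assms(3) that by blast
qed

lemma funpow_in_preimage_iter:
  assumes "x \<in> preimage_iter A q n B" "k \<le> n"
  shows "(q ^^ (n - k)) x \<in> preimage_iter A q k B"
proof -
  have "(q ^^ k) ((q ^^ (n - k)) x) = (q ^^ (k + (n - k))) x"
    by (simp add: funpow_add)
  then have "(q ^^ k) ((q ^^ (n - k)) x) = (q ^^ n) x"
    using assms(2) by simp
  then show ?thesis
    using assms(1) funpow_q_maps_A unfolding preimage_iter_def by auto
qed

lemma funpow_image_component_subset:
  assumes "x \<in> preimage_iter A q (k + i) B"
  shows "(q ^^ i) ` connected_component_set (preimage_iter A q (k + i) B) x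
           \<subseteq> connected_component_set (preimage_iter A q k B) ((q ^^ i) x)"
proof (rule connected_component_maximal)
  let ?W = "connected_component_set (preimage_iter A q (k + i) B) x"
  have W: "?W \<subseteq> A" "\<And>z. z \<in> ?W \<Longrightarrow> (q ^^ (k + i)) z \<in> B"
    using connected_component_subset unfolding preimage_iter_def by blast+
  show "(q ^^ i) x \<in> (q ^^ i) ` ?W"
    using assms by simp
  show "connected ((q ^^ i) ` ?W)"
    by (rule connected_continuous_image[OF continuous_on_subset[OF continuous_on_funpow_q W(1)]]) simp
  show "(q ^^ i) ` ?W \<subseteq> preimage_iter A q k B"
  proof
    fix y
    assume "y \<in> (q ^^ i) ` ?W"
    then obtain z where "z \<in> ?W" "y = (q ^^ i) z"
      by blast
    then have "z \<in> A" "(q ^^ k) y \<in> B"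
      using W by (auto simp: funpow_add)
    then show "y \<in> preimage_iter A q k B"
      using funpow_q_maps_A \<open>y = (q ^^ i) z\<close> unfolding preimage_iter_def by blast
  qed
qed

lemma funpow_image_pullback_component:
  assumes "x \<in> preimage_iter A q n B" "k + i \<le> n"
  shows "(q ^^ i) ` connected_component_set (preimage_iter A q (k + i) B) ((q ^^ (n - (k + i))) x)
           \<subseteq> connected_component_set (preimage_iter A q k B) ((q ^^ (n - k)) x)"
proof -
  have "(q ^^ i) ((q ^^ (n - (k + i))) x) = (q ^^ (i + (n - (k + i)))) x"
    by (simp add: funpow_add)
  also have "i + (n - (k + i)) = n - k"
    using assms(2) by simp
  finally show ?thesis
    using funpow_image_component_subset[OF funpow_in_preimage_iter[OF assms]] by simp
qed

end

locale invertible_ifs_scales = invertible_ifs +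
  fixes s \<eta> :: real
  assumes overlap_sep: "\<And>c c'. c \<in> Ov \<Longrightarrow> c' \<in> Ov \<Longrightarrow> c \<noteq> c' \<Longrightarrow> s \<le> dist c c'"
    and overlap_return: "\<And>c k. c \<in> Ov \<Longrightarrow> 1 \<le> k \<Longrightarrow> \<eta> \<le> dist ((q ^^ k) c) c"
begin

lemma diameter_ge_overlap_return:
  assumes "c \<in> Ov" "1 \<le> k" "S \<subseteq> A" "c \<in> S" "(q ^^ k) c \<in> S"
  shows "\<eta> \<le> diameter S"
  using overlap_return[OF assms(1,2)]
    diameter_bounded_bound[OF bounded_subset_A[OF assms(3)] assms(5,4)] by linarith

lemma diameter_le_image_q_overlap:
  assumes \<Gamma>: "\<Gamma> \<subseteq> A" "connected \<Gamma>" and c: "c \<in> Ov \<inter> \<Gamma>"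
    and small: "2 * \<rho> * diameter (q ` \<Gamma>) < s"
  shows "diameter \<Gamma> \<le> 2 * \<rho> * diameter (q ` \<Gamma>)"
proof -
  define r where "r = \<rho> * diameter (q ` \<Gamma>)"
  have "q ` \<Gamma> \<subseteq> A"
    using \<Gamma>(1) q_maps_A by blast
  then have bounded: "bounded (q ` \<Gamma>)"
    by (rule bounded_subset_A)
  have cover: "\<Gamma> \<subseteq> (\<Union>c'\<in>Ov \<inter> \<Gamma>. cball c' r)"
  proof
    fix z
    assume "z \<in> \<Gamma>"
    then obtain c' j where c': "c' \<in> Ov \<inter> \<Gamma>" "j \<in> {1..m}" "z \<in> f j ` A" "c' \<in> f j ` A"
      using overlap_in_common_piece[OF \<Gamma> _ \<open>z \<in> \<Gamma>\<close>] c by blast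
    have "dist (q c') (q z) \<le> diameter (q ` \<Gamma>)"
      using diameter_bounded_bound[OF bounded] c'(1) \<open>z \<in> \<Gamma>\<close> by blast
    then have "dist c' z \<le> r"
      unfolding r_def using dist_q_piece[OF c'(2,4,3)] ratio by simp
    then have "z \<in> cball c' r"
      by simp
    with c'(1) show "z \<in> (\<Union>c'\<in>Ov \<inter> \<Gamma>. cball c' r)"
      by (rule UN_I)
  qed
  have separated: "2 * r < dist a b" if "a \<in> Ov \<inter> \<Gamma>" "b \<in> Ov \<inter> \<Gamma>" "a \<noteq> b" for a b
    using overlap_sep[of a b] that small unfolding r_def by simp
  have unique: "c' = c" if "c' \<in> Ov \<inter> \<Gamma>" for c'
    using connected_cover_by_separated_cballs[OF \<Gamma>(2) cover _ _ separated that c] finite_overlap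
    by blast
  have near: "dist z c \<le> r" if "z \<in> \<Gamma>" for z
  proof -
    obtain c' where "c' \<in> Ov \<inter> \<Gamma>" "dist c' z \<le> r"
      using cover \<open>z \<in> \<Gamma>\<close> by auto
    then show ?thesis
      using unique by (metis dist_commute)
  qed
  show ?thesis
  proof (rule diameter_le)
    show "\<Gamma> \<noteq> {} \<or> 0 \<le> 2 * \<rho> * diameter (q ` \<Gamma>)"
      using c by blast
    fix z w
    assume "z \<in> \<Gamma>" "w \<in> \<Gamma>"
    then have "dist z c \<le> r" "dist w c \<le> r"
      using near by blast+
    then show "norm (z - w) \<le> 2 * \<rho> * diameter (q ` \<Gamma>)"
      using dist_triangle2[of z w c] unfolding r_def by (simp add: dist_norm)
  qed
qed

lemma diameter_image_q_overlap:
  assumes \<Gamma>: "\<Gamma> \<subseteq> A" "connected \<Gamma>" and c: "c \<in> Ov \<inter> \<Gamma>"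
    and small: "diameter \<Gamma> < s"
  shows "diameter (q ` \<Gamma>) \<le> 2 * diameter \<Gamma> / \<rho>"
proof -
  have bounded: "bounded \<Gamma>"
    using \<Gamma>(1) bounded_subset_A by blast
  have unique: "c' = c" if "c' \<in> Ov \<inter> \<Gamma>" for c'
    using overlap_sep[of c' c] diameter_bounded_bound[OF bounded, of c' c] that c small by force
  have near: "dist (q z) (q c) \<le> diameter \<Gamma> / \<rho>" if "z \<in> \<Gamma>" for z
  proof -
    obtain c' j where c': "c' \<in> Ov \<inter> \<Gamma>" "j \<in> {1..m}" "z \<in> f j ` A" "c' \<in> f j ` A"
      using overlap_in_common_piece[OF \<Gamma> _ \<open>z \<in> \<Gamma>\<close>] c by blast
    then have "dist z c = \<rho> * dist (q z) (q c)"
      using dist_q_piece unique by blast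
    moreover have "dist z c \<le> diameter \<Gamma>"
      using diameter_bounded_bound[OF bounded that] c by blast
    ultimately show ?thesis
      using ratio by (simp add: field_simps)
  qed
  show ?thesis
  proof (rule diameter_le)
    show "q ` \<Gamma> \<noteq> {} \<or> 0 \<le> 2 * diameter \<Gamma> / \<rho>"
      using c by blast
    fix z w
    assume "z \<in> q ` \<Gamma>" "w \<in> q ` \<Gamma>"
    then have "dist z (q c) \<le> diameter \<Gamma> / \<rho>" "dist w (q c) \<le> diameter \<Gamma> / \<rho>"
      using near by auto
    then show "norm (z - w) \<le> 2 * diameter \<Gamma> / \<rho>"
      using dist_triangle2[of z w "q c"] by (simp add: dist_norm)
  qed
qed

lemma diameter_preimage_step:
  assumes \<Gamma>: "\<Gamma> \<subseteq> A" "connected \<Gamma>" and \<Delta>: "q ` \<Gamma> \<subseteq> \<Delta>" "\<Delta> \<subseteq> A"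
    and small: "diameter \<Delta> < s / 2"
  shows "diameter \<Gamma> \<le> \<rho> * diameter \<Delta> \<or> diameter \<Gamma> \<le> 2 * \<rho> * diameter \<Delta> \<and> Ov \<inter> \<Gamma> \<noteq> {}"
proof -
  have image_le: "diameter (q ` \<Gamma>) \<le> diameter \<Delta>"
    using diameter_subset[OF \<Delta>(1) bounded_subset_A[OF \<Delta>(2)]] .
  show ?thesis
  proof (cases "Ov \<inter> \<Gamma> = {}")
    case True
    then have "diameter \<Gamma> = \<rho> * diameter (q ` \<Gamma>)"
      using diameter_image_q_no_overlap[OF \<Gamma>] ratio by simp
    then show ?thesis
      using image_le ratio by (simp add: mult_left_mono)
  next
    case False
    then obtain c where c: "c \<in> Ov \<inter> \<Gamma>"
      by blast
    have contracted: "2 * \<rho> * diameter (q ` \<Gamma>) \<le> 2 * \<rho> * diameter \<Delta>"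
      using image_le ratio by (intro mult_left_mono) simp_all
    have "\<rho> * diameter \<Delta> \<le> diameter \<Delta>"
      using ratio diameter_ge_0[OF bounded_subset_A[OF \<Delta>(2)]] by (intro mult_left_le_one_le) simp_all
    then have "2 * \<rho> * diameter (q ` \<Gamma>) < s"
      using contracted small by linarith
    then have "diameter \<Gamma> \<le> 2 * \<rho> * diameter \<Delta>"
      using diameter_le_image_q_overlap[OF \<Gamma> c] contracted by linarith
    then show ?thesis
      using False by blast
  qed
qed

lemma diameter_image_step:
  assumes \<Gamma>: "\<Gamma> \<subseteq> A" "connected \<Gamma>" and small: "diameter \<Gamma> < s"
  shows "diameter (q ` \<Gamma>) \<le> diameter \<Gamma> / \<rho>
    \<or> diameter (q ` \<Gamma>) \<le> 2 * diameter \<Gamma> / \<rho> \<and> Ov \<inter> \<Gamma> \<noteq> {}"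
proof (cases "Ov \<inter> \<Gamma> = {}")
  case True
  then show ?thesis
    using diameter_image_q_no_overlap[OF \<Gamma>] by simp
next
  case False
  then obtain c where "c \<in> Ov \<inter> \<Gamma>"
    by blast
  then show ?thesis
    using diameter_image_q_overlap[OF \<Gamma> _ small] False by blast
qed

text \<open>The two chain arguments below count the overlap points met so far (G, resp. H): the factor 2
  is only paid when a new one appears, since meeting an old one again would be a return of its
  q-orbit within a set of diameter less than \<eta>.\<close>

lemma component_diameter_le:
  assumes x: "x \<in> preimage_iter A q n B" and B: "B \<subseteq> A"
    and small: "2 ^ card Ov * diameter B < \<eta>" "2 ^ card Ov * diameter B < s / 2"
  shows "diameter (connected_component_set (preimage_iter A q n B) x) \<le> 2 ^ card Ov * \<rho> ^ n * diameter B"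
proof -
  define V where "V k = connected_component_set (preimage_iter A q k B) ((q ^^ (n - k)) x)" for k
  define G where "G k = Ov \<inter> (\<Union>j\<le>k. V j)" for k
  have V_A: "V k \<subseteq> A" for k
    unfolding V_def preimage_iter_def using connected_component_subset by blast
  have V_connected: "connected (V k)" for k
    unfolding V_def by simp
  have V_chain: "(q ^^ i) ` V (k + i) \<subseteq> V k" if "k + i \<le> n" for k i
    unfolding V_def by (rule funpow_image_pullback_component[OF x that])
  have card_G: "card (G k) \<le> card Ov" "card (G k) \<le> card (G (Suc k))" for k
    unfolding G_def using finite_overlap by (auto simp: atMost_Suc intro!: card_mono)
  have B0: "0 \<le> diameter B"
    using diameter_ge_0 bounded_subset_A[OF B] by blast
  have "diameter (V n) \<le> 2 ^ card (G n) * \<rho> ^ n * diameter B"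
  proof (rule doubling_growth_bound[where d = "\<lambda>k. diameter (V k)" and c = "\<lambda>k. card (G k)"])
    have "V 0 \<subseteq> B"
      unfolding V_def preimage_iter_def using connected_component_subset by fastforce
    then have "diameter (V 0) \<le> diameter B"
      using diameter_subset bounded_subset_A[OF B] by blast
    moreover have "1 * diameter B \<le> 2 ^ card (G 0) * diameter B"
      using B0 by (intro mult_right_mono) simp_all
    ultimately show "diameter (V 0) \<le> 2 ^ card (G 0) * diameter B"
      by simp
  next
    fix k
    assume "k < n" and IH: "\<And>j. j \<le> k \<Longrightarrow> diameter (V j) \<le> 2 ^ card (G j) * \<rho> ^ j * diameter B"
    have small_V: "diameter (V j) < \<eta> \<and> diameter (V j) < s / 2" if "j \<le> k" for j
    proof -
      have "2 ^ card (G j) * \<rho> ^ j \<le> 2 ^ card Ov * 1"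
        using card_G(1) ratio by (intro mult_mono power_increasing power_le_one) auto
      then have "2 ^ card (G j) * \<rho> ^ j * diameter B \<le> 2 ^ card Ov * 1 * diameter B"
        using B0 by (rule mult_right_mono)
      then show ?thesis
        using IH[OF that] small by linarith
    qed
    have "q ` V (Suc k) \<subseteq> V k"
      using V_chain[of k 1] \<open>k < n\<close> by simp
    moreover have "diameter (V k) < s / 2"
      using small_V[of k] by simp
    ultimately have "diameter (V (Suc k)) \<le> \<rho> * diameter (V k)
        \<or> diameter (V (Suc k)) \<le> 2 * \<rho> * diameter (V k) \<and> Ov \<inter> V (Suc k) \<noteq> {}"
      by (rule diameter_preimage_step[OF V_A V_connected _ V_A])
    then show "diameter (V (Suc k)) \<le> \<rho> * diameter (V k) \<or>
        diameter (V (Suc k)) \<le> 2 * \<rho> * diameter (V k) \<and> card (G k) < card (G (Suc k))"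
    proof (elim disjE conjE)
      assume le: "diameter (V (Suc k)) \<le> 2 * \<rho> * diameter (V k)" and "Ov \<inter> V (Suc k) \<noteq> {}"
      then obtain c where c: "c \<in> Ov \<inter> V (Suc k)"
        by blast
      have "c \<notin> G k"
      proof
        assume "c \<in> G k"
        then obtain j where "j \<le> k" "c \<in> V j"
          unfolding G_def by blast
        then have "(q ^^ (Suc k - j)) c \<in> V j"
          using V_chain[of j "Suc k - j"] c \<open>k < n\<close> by auto
        then have "\<eta> \<le> diameter (V j)"
          using diameter_ge_overlap_return[of c "Suc k - j" "V j"] V_A c \<open>c \<in> V j\<close> \<open>j \<le> k\<close>
          by simp
        then show False
          using small_V[OF \<open>j \<le> k\<close>] by simp
      qed
      then have "G k \<subset> G (Suc k)"
        using c unfolding G_def by (auto simp: atMost_Suc)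
      then have "card (G k) < card (G (Suc k))"
        using finite_overlap unfolding G_def by (intro psubset_card_mono) auto
      then show ?thesis
        using le by blast
    qed simp
  qed (use B0 card_G ratio in auto)
  also have "\<dots> \<le> 2 ^ card Ov * \<rho> ^ n * diameter B"
    using card_G(1) ratio B0 by (intro mult_right_mono power_increasing) auto
  finally show ?thesis
    unfolding V_def by simp
qed

lemma diameter_funpow_image_le:
  assumes \<Gamma>: "\<Gamma> \<subseteq> A" "connected \<Gamma>"
    and small: "2 ^ card Ov * (1 / \<rho>) ^ n * diameter \<Gamma> < \<eta>"
      "2 ^ card Ov * (1 / \<rho>) ^ n * diameter \<Gamma> < s"
  shows "diameter ((q ^^ n) ` \<Gamma>) \<le> 2 ^ card Ov * (1 / \<rho>) ^ n * diameter \<Gamma>"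
proof -
  define V where "V k = (q ^^ k) ` \<Gamma>" for k
  define H where "H k = Ov \<inter> (\<Union>j<k. V j)" for k
  have V_A: "V k \<subseteq> A" for k
    unfolding V_def using funpow_q_maps_A \<Gamma>(1) by blast
  have V_connected: "connected (V k)" for k
    unfolding V_def
    by (rule connected_continuous_image[OF continuous_on_subset[OF continuous_on_funpow_q \<Gamma>(1)] \<Gamma>(2)])
  have V_shift: "(q ^^ i) ` V j = V (i + j)" for i j
    unfolding V_def by (simp add: funpow_add image_comp)
  have card_H: "card (H k) \<le> card Ov" "card (H k) \<le> card (H (Suc k))" for k
    unfolding H_def using finite_overlap by (auto simp: lessThan_Suc intro!: card_mono)
  have \<Gamma>0: "0 \<le> diameter \<Gamma>"
    using diameter_ge_0 bounded_subset_A[OF \<Gamma>(1)] by blast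
  have a1: "1 \<le> 1 / \<rho>"
    using ratio by simp
  have "diameter (V n) \<le> 2 ^ card (H n) * (1 / \<rho>) ^ n * diameter \<Gamma>"
  proof (rule doubling_growth_bound[where d = "\<lambda>k. diameter (V k)" and c = "\<lambda>k. card (H k)"])
    show "0 \<le> 1 / \<rho>"
      using a1 by linarith
    show "0 \<le> diameter \<Gamma>"
      by (rule \<Gamma>0)
    show "diameter (V 0) \<le> 2 ^ card (H 0) * diameter \<Gamma>"
      by (simp add: V_def H_def)
    show "card (H k) \<le> card (H (Suc k))" for k
      by (rule card_H(2))
    show "n \<le> n" ..
  next
    fix k
    assume "k < n" and IH: "\<And>j. j \<le> k \<Longrightarrow> diameter (V j) \<le> 2 ^ card (H j) * (1 / \<rho>) ^ j * diameter \<Gamma>"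
    have small_V: "diameter (V j) < \<eta> \<and> diameter (V j) < s" if "j \<le> k" for j
    proof -
      have "2 ^ card (H j) * (1 / \<rho>) ^ j \<le> 2 ^ card Ov * (1 / \<rho>) ^ n"
        using card_H(1) a1 that \<open>k < n\<close> ratio by (intro mult_mono power_increasing) auto
      then have "2 ^ card (H j) * (1 / \<rho>) ^ j * diameter \<Gamma> \<le> 2 ^ card Ov * (1 / \<rho>) ^ n * diameter \<Gamma>"
        using \<Gamma>0 by (rule mult_right_mono)
      then have "diameter (V j) \<le> 2 ^ card Ov * (1 / \<rho>) ^ n * diameter \<Gamma>"
        using IH[OF that] by linarith
      then show ?thesis
        using small by linarith
    qed
    have "diameter (V k) < s"
      using small_V[of k] by simp
    moreover have "V (Suc k) = q ` V k"
      using V_shift[of 1 k] by simp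
    ultimately have "diameter (V (Suc k)) \<le> diameter (V k) / \<rho>
        \<or> diameter (V (Suc k)) \<le> 2 * diameter (V k) / \<rho> \<and> Ov \<inter> V k \<noteq> {}"
      using diameter_image_step[OF V_A V_connected] by simp
    then show "diameter (V (Suc k)) \<le> 1 / \<rho> * diameter (V k) \<or>
        diameter (V (Suc k)) \<le> 2 * (1 / \<rho>) * diameter (V k) \<and> card (H k) < card (H (Suc k))"
    proof (elim disjE conjE)
      assume le: "diameter (V (Suc k)) \<le> 2 * diameter (V k) / \<rho>" and "Ov \<inter> V k \<noteq> {}"
      then obtain c where c: "c \<in> Ov \<inter> V k"
        by blast
      have "c \<notin> H k"
      proof
        assume "c \<in> H k"
        then obtain j where "j < k" "c \<in> V j"
          unfolding H_def by blast
        then have "(q ^^ (k - j)) c \<in> V k"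
          using V_shift[of "k - j" j] by auto
        then have "\<eta> \<le> diameter (V k)"
          using diameter_ge_overlap_return[of c "k - j" "V k"] V_A c \<open>j < k\<close> by simp
        then show False
          using small_V[of k] by simp
      qed
      then have "H k \<subset> H (Suc k)"
        using c unfolding H_def by (auto simp: lessThan_Suc)
      then have "card (H k) < card (H (Suc k))"
        using finite_overlap unfolding H_def by (intro psubset_card_mono) auto
      then show ?thesis
        using le by simp
    qed simp
  qed
  also have "\<dots> \<le> 2 ^ card Ov * ((1 / \<rho>) ^ n * diameter \<Gamma>)"
  proof -
    have "(2::real) ^ card (H n) \<le> 2 ^ card Ov"
      using card_H(1) by (rule power_increasing) simp
    moreover have "0 \<le> (1 / \<rho>) ^ n * diameter \<Gamma>"
      using \<Gamma>0 ratio by simp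
    ultimately have "2 ^ card (H n) * ((1 / \<rho>) ^ n * diameter \<Gamma>) \<le> 2 ^ card Ov * ((1 / \<rho>) ^ n * diameter \<Gamma>)"
      by (rule mult_right_mono)
    then show ?thesis
      by (simp only: mult.assoc)
  qed
  finally show ?thesis
    unfolding V_def by (simp only: mult.assoc)
qed

lemma connected_subset_component:
  assumes x: "x \<in> preimage_iter A q n B" and \<Gamma>: "\<Gamma> \<subseteq> A" "connected \<Gamma>" "x \<in> \<Gamma>"
    and small: "2 ^ card Ov * (1 / \<rho>) ^ n * diameter \<Gamma> < inr A B ((q ^^ n) x)"
    and r: "inr A B ((q ^^ n) x) \<le> \<eta>" "inr A B ((q ^^ n) x) \<le> s"
  shows "\<Gamma> \<subseteq> connected_component_set (preimage_iter A q n B) x"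
proof (rule connected_component_maximal[OF \<Gamma>(3,2)])
  let ?r = "inr A B ((q ^^ n) x)"
  have "diameter ((q ^^ n) ` \<Gamma>) \<le> 2 ^ card Ov * (1 / \<rho>) ^ n * diameter \<Gamma>"
    using small r by (intro diameter_funpow_image_le[OF \<Gamma>(1,2)]) simp_all
  then have "diameter ((q ^^ n) ` \<Gamma>) < ?r"
    using small by linarith
  moreover have "(q ^^ n) ` \<Gamma> \<subseteq> A"
    using \<Gamma>(1) funpow_q_maps_A by blast
  ultimately have near: "dist ((q ^^ n) x) ((q ^^ n) y) < ?r" if "y \<in> \<Gamma>" for y
    using diameter_bounded_bound[OF bounded_subset_A, of "(q ^^ n) ` \<Gamma>"] \<Gamma>(3) that
    by fastforce
  show "\<Gamma> \<subseteq> preimage_iter A q n B"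
  proof
    fix y
    assume "y \<in> \<Gamma>"
    then have "y \<in> A" "(q ^^ n) y \<in> A"
      using \<Gamma>(1) funpow_q_maps_A by blast+
    moreover have "(q ^^ n) y \<in> B"
    proof (rule ccontr)
      assume "(q ^^ n) y \<notin> B"
      then have "?r \<le> dist ((q ^^ n) x) ((q ^^ n) y)"
        unfolding inr_def using \<open>(q ^^ n) y \<in> A\<close> by (intro infdist_le) simp
      then show False
        using near[OF \<open>y \<in> \<Gamma>\<close>] by simp
    qed
    ultimately show "y \<in> preimage_iter A q n B"
      unfolding preimage_iter_def by blast
  qed
qed

lemma dist_ge_outside_component:
  assumes turning: "bounded_turning A L" "0 < L" and x: "x \<in> preimage_iter A q n B"
    and r: "inr A B ((q ^^ n) x) \<le> \<eta>" "inr A B ((q ^^ n) x) \<le> s"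
    and z: "z \<in> A" "z \<notin> connected_component_set (preimage_iter A q n B) x"
  shows "\<rho> ^ n * inr A B ((q ^^ n) x) / (2 ^ card Ov * L) \<le> dist x z"
proof (rule ccontr)
  define r where "r = inr A B ((q ^^ n) x)"
  define C :: real where "C = 2 ^ card Ov"
  have "1 \<le> C"
    unfolding C_def by simp
  assume "\<not> ?thesis"
  then have "L * dist x z < \<rho> ^ n * r / C"
    using turning(2) \<open>1 \<le> C\<close> unfolding r_def C_def by (simp add: field_simps)
  have "x \<in> A"
    using x unfolding preimage_iter_def by blast
  then obtain \<gamma> where \<gamma>: "path \<gamma>" "path_image \<gamma> \<subseteq> A" "pathstart \<gamma> = x" "pathfinish \<gamma> = z"
      "diameter (path_image \<gamma>) \<le> L * dist x z"
    using turning(1) z(1) unfolding bounded_turning_def by blast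
  have "diameter (path_image \<gamma>) < \<rho> ^ n * r / C"
    using \<gamma>(5) \<open>L * dist x z < \<rho> ^ n * r / C\<close> by linarith
  then have "C * (1 / \<rho>) ^ n * diameter (path_image \<gamma>) < C * (1 / \<rho>) ^ n * (\<rho> ^ n * r / C)"
    using \<open>1 \<le> C\<close> ratio by (intro mult_strict_left_mono) simp_all
  also have "\<dots> = r"
    using \<open>1 \<le> C\<close> ratio by (simp add: power_one_over)
  finally have "path_image \<gamma> \<subseteq> connected_component_set (preimage_iter A q n B) x"
    unfolding C_def r_def
    using connected_subset_component[OF x \<gamma>(2) connected_path_image[OF \<gamma>(1)]] r
      pathstart_in_path_image[of \<gamma>] \<gamma>(3)
    by simp
  then show False
    using z(2) \<gamma>(4) pathfinish_in_path_image[of \<gamma>] by blast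
qed

lemma inr_component_ge:
  assumes turning: "bounded_turning A L" and x: "x \<in> preimage_iter A q n B"
    and r: "inr A B ((q ^^ n) x) \<le> \<eta>" "inr A B ((q ^^ n) x) \<le> s"
  shows "\<rho> ^ n * inr A B ((q ^^ n) x) / (2 ^ card Ov * L)
           \<le> inr A (connected_component_set (preimage_iter A q n B) x) x"
proof -
  define W where "W = connected_component_set (preimage_iter A q n B) x"
  define t where "t = \<rho> ^ n * inr A B ((q ^^ n) x) / (2 ^ card Ov * L)"
  consider "L \<le> 0" | "A - W = {}" | "0 < L" "A - W \<noteq> {}"
    by linarith
  then have "t \<le> infdist x (A - W)"
  proof cases
    case 1
    have "0 \<le> \<rho> ^ n * inr A B ((q ^^ n) x)"
      using ratio by (simp add: inr_def infdist_nonneg)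
    moreover have "2 ^ card Ov * L \<le> 0"
      using 1 by (simp add: mult_nonneg_nonpos)
    ultimately have "t \<le> 0"
      unfolding t_def by (rule divide_nonneg_nonpos)
    then show ?thesis
      using infdist_nonneg order_trans by blast
  next
    case 2
    then have "(q ^^ n) a \<in> B" if "a \<in> A" for a
      using that unfolding W_def preimage_iter_def using connected_component_subset by blast
    then have "A - B = {}"
      using A_subset_image_funpow_q[of n] by blast
    then have "inr A B ((q ^^ n) x) = 0"
      unfolding inr_def by (simp add: infdist_def)
    then show ?thesis
      unfolding t_def by (simp add: infdist_nonneg)
  next
    case 3
    have "t \<le> dist x z" if "z \<in> A - W" for z
      using dist_ge_outside_component[OF turning 3(1) x r] that unfolding t_def W_def by blast
    then show ?thesis
      unfolding infdist_notempty[OF 3(2)] by (rule cINF_greatest[OF 3(2)])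
  qed
  then show ?thesis
    unfolding W_def t_def inr_def .
qed

lemma component_estimates:
  assumes turning: "bounded_turning A L" and x: "x \<in> preimage_iter A q n B" and B: "B \<subseteq> A"
    and small: "2 ^ card Ov * diameter B < \<eta>" "2 ^ card Ov * diameter B < s / 2"
  defines "W \<equiv> connected_component_set (preimage_iter A q n B) x"
  shows "diameter W \<le> 2 ^ card Ov * \<rho> ^ n * diameter B"
    and "inr A W x \<le> diameter W"
    and "\<rho> ^ n * inr A B ((q ^^ n) x) / (2 ^ card Ov * L) \<le> inr A W x"
proof -
  show "diameter W \<le> 2 ^ card Ov * \<rho> ^ n * diameter B"
    unfolding W_def using component_diameter_le[OF x B small] .
  have "W \<subseteq> A"
    unfolding W_def preimage_iter_def using connected_component_subset by blast
  moreover have "x \<in> W"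
    unfolding W_def using x by simp
  ultimately show "inr A W x \<le> diameter W"
    unfolding inr_def using infdist_le_diameter_of_connected[OF connected_A _ bounded_subset_A]
    by blast
  have "(q ^^ n) x \<in> B"
    using x unfolding preimage_iter_def by blast
  then have "inr A B ((q ^^ n) x) \<le> diameter B"
    unfolding inr_def using infdist_le_diameter_of_connected[OF connected_A B bounded_subset_A[OF B]]
    by blast
  moreover have "diameter B \<le> 2 ^ card Ov * diameter B"
    using diameter_ge_0[OF bounded_subset_A[OF B]] by (simp add: mult_le_cancel_right1)
  ultimately have "inr A B ((q ^^ n) x) \<le> \<eta>" "inr A B ((q ^^ n) x) \<le> s"
    using small diameter_ge_0[OF bounded_subset_A[OF B]] by linarith+
  then show "\<rho> ^ n * inr A B ((q ^^ n) x) / (2 ^ card Ov * L) \<le> inr A W x"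
    unfolding W_def by (rule inr_component_ge[OF turning x])
qed

end

theorem lemma3p5:
  fixes m :: nat and f :: "nat \<Rightarrow> complex \<Rightarrow> complex" and lam :: complex
    and A :: "complex set" and q :: "complex \<Rightarrow> complex"
  assumes "m \<ge> 2"
    and "0 < cmod lam" and "cmod lam < 1"
    and "similarity_IFS m (cmod lam) f"
    and "is_attractor m f A"
    and "connected A"
    and "inverse_map m f A q"
    and "finite (overlap_set m f A)" and "overlap_set m f A \<noteq> {}"
    and "critically_non_recurrent m f A q"
  shows "\<exists>C \<delta>1. C \<ge> 1 \<and> \<delta>1 > 0 \<and>
    (\<forall>L. bounded_turning A L \<longrightarrow>
      (\<forall>B n x. B \<subseteq> A \<and> connected B \<and> diameter B < \<delta>1 \<and> x \<in> preimage_iter A q n B \<longrightarrow>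
         C * cmod lam ^ n * diameter B \<ge> diameter (connected_component_set (preimage_iter A q n B) x)
         \<and> diameter (connected_component_set (preimage_iter A q n B) x)
             \<ge> inr A (connected_component_set (preimage_iter A q n B) x) x
         \<and> inr A (connected_component_set (preimage_iter A q n B) x) x
             \<ge> cmod lam ^ n * inr A B ((q ^^ n) x) / (C * L)))"
proof -
  interpret invertible_ifs m f "cmod lam" A q
    using assms by unfold_locales auto
  obtain s where "s > 0" and sep: "\<forall>c\<in>Ov. \<forall>c'\<in>Ov - {c}. s \<le> dist c c'"
    using overlap_separated by blast
  obtain \<eta> where "\<eta> > 0" and return: "\<forall>c\<in>Ov. \<forall>k\<in>{1..}. \<eta> \<le> dist ((q ^^ k) c) c"
    using overlap_non_recurrent by blast
  interpret invertible_ifs_scales m f "cmod lam" A q s \<eta>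
    using sep return by unfold_locales auto
  define C :: real where "C = 2 ^ card Ov"
  define \<delta> where "\<delta> = min \<eta> (s / 2) / C"
  have "1 \<le> C" "0 < \<delta>"
    unfolding \<delta>_def C_def using \<open>s > 0\<close> \<open>\<eta> > 0\<close> by simp_all
  moreover have "C * cmod lam ^ n * diameter B \<ge> diameter W \<and> diameter W \<ge> inr A W x
      \<and> inr A W x \<ge> cmod lam ^ n * inr A B ((q ^^ n) x) / (C * L)"
    if "bounded_turning A L" "B \<subseteq> A" "diameter B < \<delta>" "x \<in> preimage_iter A q n B"
      and "W = connected_component_set (preimage_iter A q n B) x" for L B n x W
  proof -
    have "C * diameter B < \<eta>" "C * diameter B < s / 2"
      using that(3) \<open>1 \<le> C\<close> unfolding \<delta>_def by (simp_all add: field_simps)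
    then show ?thesis
      using component_estimates[OF that(1,4,2)] unfolding C_def that(5) by simp
  qed
  ultimately show ?thesis
    by blast
qed

end
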